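(* Let $N\ge2$ and let $\Lambda$ be a differentiable Young function satisfying $s_\Lambda<N$. Then there is $C>0$ such that for any $u\in L^{\Lambda_*}(\mathbb{R}^N)$ and $v\in L^N(\mathbb{R}^N)$ one has $\|uv\|_\Lambda\le C\|u\|_{\Lambda_*}\|v\|_N$.
   Context: A Young function is a convex $\Lambda:[0,\infty)\to[0,\infty)$ with $\Lambda(t)=0$ iff $t=0$, $\lim_{t\to0^+}\Lambda(t)/t=0$ and $\lim_{t\to\infty}\Lambda(t)/t=\infty$; $s_\Lambda:=\sup_{t>0}\frac{t\Lambda'(t)}{\Lambda(t)}$. With $N'=N/(N-1)$, the Sobolev conjugate is $\Lambda_*:=\Lambda\circ\mathscr{H}^{-1}$, where $\mathscr{H}(t)=\big(\int_0^t(\tau/\Lambda(\tau))^{N'-1}d\tau\big)^{1/N'}$. $\|\cdot\|_\Lambda$ denotes the Luxemburg norm $\inf\{\tau>0:\int_{\mathbb{R}^N}\Lambda(|u|/\tau)\,dx\le1\}$, $L^\Lambda$ the corresponding Orlicz space, $\|\cdot\|_N$ the $L^N$ norm. *)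

theory Defs
  imports "HOL-Analysis.Analysis"
begin

definition young_function :: "(real \<Rightarrow> real) \<Rightarrow> bool" where
  "young_function \<Lambda> \<longleftrightarrow>
     convex_on {0..} \<Lambda> \<and>
     (\<forall>t\<ge>0. \<Lambda> t \<ge> 0) \<and>
     (\<forall>t\<ge>0. \<Lambda> t = 0 \<longleftrightarrow> t = 0) \<and>
     ((\<lambda>t. \<Lambda> t / t) \<longlongrightarrow> 0) (at_right 0) \<and>
     filterlim (\<lambda>t. \<Lambda> t / t) at_top at_top"

definition s_index :: "(real \<Rightarrow> real) \<Rightarrow> ereal" where
  "s_index \<Lambda> = (SUP t\<in>{0<..}. ereal (t * deriv \<Lambda> t / \<Lambda> t))"

text \<open>H(t) = (int_0^t (tau/Lambda tau)^(N'-1) dtau)^(1/N'), with N' = N/(N-1),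
  so N' - 1 = 1/(N-1) and 1/N' = (N-1)/N.\<close>
definition sob_H :: "(real \<Rightarrow> real) \<Rightarrow> nat \<Rightarrow> real \<Rightarrow> real" where
  "sob_H \<Lambda> N t =
     (LBINT \<tau>=0..t. (\<tau> / \<Lambda> \<tau>) powr (1 / (real N - 1))) powr ((real N - 1) / real N)"

definition sobolev_conjugate :: "(real \<Rightarrow> real) \<Rightarrow> nat \<Rightarrow> real \<Rightarrow> real" where
  "sobolev_conjugate \<Lambda> N = \<Lambda> \<circ> inv_into {0..} (sob_H \<Lambda> N)"

definition orlicz_space :: "(real \<Rightarrow> real) \<Rightarrow> ('a::euclidean_space \<Rightarrow> real) set" where
  "orlicz_space \<Lambda> = {u \<in> borel_measurable lebesgue.
      \<exists>\<tau>>0. (\<integral>\<^sup>+ x. ennreal (\<Lambda> (\<bar>u x\<bar> / \<tau>)) \<partial>lebesgue) < \<infinity>}"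

definition luxemburg_norm :: "(real \<Rightarrow> real) \<Rightarrow> ('a::euclidean_space \<Rightarrow> real) \<Rightarrow> real" where
  "luxemburg_norm \<Lambda> u = Inf {\<tau>. \<tau> > 0 \<and>
      (\<integral>\<^sup>+ x. ennreal (\<Lambda> (\<bar>u x\<bar> / \<tau>)) \<partial>lebesgue) \<le> 1}"

definition lp_space :: "nat \<Rightarrow> ('a::euclidean_space \<Rightarrow> real) set" where
  "lp_space p = {v \<in> borel_measurable lebesgue. integrable lebesgue (\<lambda>x. \<bar>v x\<bar> ^ p)}"

definition lp_norm :: "nat \<Rightarrow> ('a::euclidean_space \<Rightarrow> real) \<Rightarrow> real" where
  "lp_norm p v = (integral\<^sup>L lebesgue (\<lambda>x. \<bar>v x\<bar> ^ p)) powr (1 / real p)"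

end

theory Submission
  imports Defs "HOL-Real_Asymp.Real_Asymp"
begin

(* The heart of the proof is a Young-type inequality
     Lambda (a b) <= Lambda_* a + K b^N    (a, b >= 0),
   with K depending only on N and on a bound s < N for the index.  The bound s says that
   Lambda t / t^s decreases, so the integrand h t = (t / Lambda t)^(1/(N-1)) of H = sob_H Lambda N
   is dominated near 0 by t^gamma with gamma = (1-s)/(N-1) > -1.  Hence H r ^ (N/(N-1)) is
   comparable to r h r, which gives Lambda r * H r ^ N <= K r^N, and splitting according to
   whether a b exceeds H^-1 a yields the inequality.  Applying it at Luxemburg-admissible scales
   of u and v gives the Hoelder inequality with C = 1 + K. *)

lemma convex_on_zero_chord:
  fixes f :: "real \<Rightarrow> real"
  assumes "convex_on {0..} f" "f 0 = 0" "0 \<le> x" "x \<le> y" "0 < y"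
  shows "f x \<le> x / y * f y"
proof -
  have "f ((1 - x/y) *\<^sub>R 0 + (x/y) *\<^sub>R y) \<le> (1 - x/y) * f 0 + (x/y) * f y"
    by (rule convex_onD[OF assms(1)]) (use assms in auto)
  then show ?thesis using assms by simp
qed

lemma convex_on_zero_divide_le:
  fixes f :: "real \<Rightarrow> real"
  assumes "convex_on {0..} f" "f 0 = 0" "0 \<le> x" "1 \<le> c"
  shows "f (x / c) \<le> f x / c"
proof (cases "x = 0")
  case False
  have "f (x / c) \<le> (x / c) / x * f x"
    by (rule convex_on_zero_chord) (use assms False in \<open>auto simp: divide_le_eq\<close>)
  then show ?thesis using False assms by simp
qed (use assms in simp)

lemma convex_on_zero_mono_on:
  fixes f :: "real \<Rightarrow> real"
  assumes "convex_on {0..} f" "f 0 = 0" "\<And>t. 0 \<le> t \<Longrightarrow> 0 \<le> f t"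
  shows "mono_on {0..} f"
proof (rule mono_onI)
  fix x y :: real assume "x \<in> {0..}" "y \<in> {0..}" "x \<le> y"
  show "f x \<le> f y"
  proof (cases "y = 0")
    case False
    then have "f x \<le> x / y * f y"
      using \<open>x \<in> {0..}\<close> \<open>y \<in> {0..}\<close> \<open>x \<le> y\<close> by (intro convex_on_zero_chord[OF assms(1,2)]) auto
    also have "\<dots> \<le> f y"
      using assms(3)[of y] \<open>x \<in> {0..}\<close> \<open>x \<le> y\<close> False
      by (intro mult_left_le_one_le) auto
    finally show ?thesis .
  qed (use \<open>x \<in> {0..}\<close> \<open>x \<le> y\<close> in simp)
qed

lemma borel_measurable_mono_on_abs_divide:
  fixes f :: "real \<Rightarrow> real" and g :: "'a \<Rightarrow> real"
  assumes "mono_on {0..} f" "g \<in> borel_measurable M" "0 \<le> c"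
  shows "(\<lambda>x. f (\<bar>g x\<bar> / c)) \<in> borel_measurable M"
proof -
  have "mono (\<lambda>y. f (max y 0))"
    using assms(1) by (auto intro!: monoI mono_onD[OF assms(1)])
  then have "(\<lambda>y. f (max y 0)) \<in> borel_measurable borel" by (rule borel_measurable_mono)
  moreover have "(\<lambda>x. \<bar>g x\<bar> / c) \<in> borel_measurable M" using assms(2) by measurable
  ultimately have "(\<lambda>x. f (max (\<bar>g x\<bar> / c) 0)) \<in> borel_measurable M"
    by (rule measurable_compose[rotated])
  then show ?thesis using assms(3) by simp
qed

lemma le_mult_cInf:
  fixes X :: "real set"
  assumes "X \<noteq> {}" "0 \<le> k" "\<And>x. x \<in> X \<Longrightarrow> y \<le> k * x"
  shows "y \<le> k * Inf X"
proof (cases "k = 0")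
  case False
  then have "y / k \<le> Inf X"
    using assms by (intro cInf_greatest) (auto simp: divide_le_eq mult.commute)
  then show ?thesis using assms(2) False by (simp add: divide_le_eq mult.commute)
qed (use assms in auto)

definition luxemburg_admissible :: "(real \<Rightarrow> real) \<Rightarrow> ('a::euclidean_space \<Rightarrow> real) \<Rightarrow> real \<Rightarrow> bool" where
  "luxemburg_admissible \<Phi> u \<tau> \<longleftrightarrow>
     0 < \<tau> \<and> (\<integral>\<^sup>+ x. ennreal (\<Phi> (\<bar>u x\<bar> / \<tau>)) \<partial>lebesgue) \<le> 1"

lemma luxemburg_norm_eq_Inf_admissible:
  "luxemburg_norm \<Phi> u = Inf (Collect (luxemburg_admissible \<Phi> u))"
  by (simp add: luxemburg_norm_def luxemburg_admissible_def[abs_def])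

lemma luxemburg_norm_nonneg:
  assumes "luxemburg_admissible \<Phi> u \<tau>"
  shows "0 \<le> luxemburg_norm \<Phi> u"
  unfolding luxemburg_norm_eq_Inf_admissible
  using assms by (intro cInf_greatest) (auto simp: luxemburg_admissible_def)

lemma luxemburg_norm_le:
  assumes "luxemburg_admissible \<Phi> u \<tau>"
  shows "luxemburg_norm \<Phi> u \<le> \<tau>"
  unfolding luxemburg_norm_eq_Inf_admissible
  using assms by (intro cInf_lower bdd_belowI[of _ 0]) (auto simp: luxemburg_admissible_def)

lemma luxemburg_admissible_imp_orlicz_space:
  assumes "luxemburg_admissible \<Phi> u \<tau>" "u \<in> borel_measurable lebesgue"
  shows "u \<in> orlicz_space \<Phi>"
  using assms unfolding luxemburg_admissible_def orlicz_space_def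
  by (auto intro: le_less_trans[OF _ ennreal_one_less_top])

text \<open>Stands in for the usual convexity argument, since convexity of the Sobolev conjugate
  is not available.\<close>
lemma orlicz_space_imp_luxemburg_admissible:
  assumes u: "u \<in> orlicz_space \<Phi>"
    and mono: "mono_on {0..} \<Phi>" and nonneg: "\<And>t. 0 \<le> t \<Longrightarrow> 0 \<le> \<Phi> t"
    and dilation: "\<And>c. 1 \<le> c \<Longrightarrow> \<exists>d>0. \<forall>a\<ge>0. \<Phi> (a / d) \<le> \<Phi> a / c"
  obtains \<tau> where "luxemburg_admissible \<Phi> u \<tau>"
proof -
  obtain \<tau> where \<tau>: "0 < \<tau>" and fin: "(\<integral>\<^sup>+ x. ennreal (\<Phi> (\<bar>u x\<bar> / \<tau>)) \<partial>lebesgue) < \<infinity>"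
    and meas: "u \<in> borel_measurable lebesgue"
    using u by (auto simp: orlicz_space_def)
  define I where "I = (\<integral>\<^sup>+ x. ennreal (\<Phi> (\<bar>u x\<bar> / \<tau>)) \<partial>lebesgue)"
  define c where "c = max 1 (enn2real I)"
  have c: "1 \<le> c" by (simp add: c_def)
  obtain d where d: "0 < d" "\<And>a. 0 \<le> a \<Longrightarrow> \<Phi> (a / d) \<le> \<Phi> a / c"
    using dilation[OF c] by blast
  have "(\<integral>\<^sup>+ x. ennreal (\<Phi> (\<bar>u x\<bar> / (d * \<tau>))) \<partial>lebesgue)
      \<le> (\<integral>\<^sup>+ x. ennreal (1 / c) * ennreal (\<Phi> (\<bar>u x\<bar> / \<tau>)) \<partial>lebesgue)"
  proof (intro nn_integral_mono)
    fix x
    have "\<Phi> (\<bar>u x\<bar> / (d * \<tau>)) \<le> 1 / c * \<Phi> (\<bar>u x\<bar> / \<tau>)"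
      using d(2)[of "\<bar>u x\<bar> / \<tau>"] \<tau> by (simp add: mult.commute)
    then show "ennreal (\<Phi> (\<bar>u x\<bar> / (d * \<tau>))) \<le> ennreal (1 / c) * ennreal (\<Phi> (\<bar>u x\<bar> / \<tau>))"
      using c nonneg[of "\<bar>u x\<bar> / \<tau>"] \<tau> by (simp add: ennreal_mult[symmetric] ennreal_leI)
  qed
  also have "\<dots> = ennreal (1 / c) * I"
    unfolding I_def using borel_measurable_mono_on_abs_divide[OF mono meas, of \<tau>] \<tau>
    by (simp add: nn_integral_cmult)
  also have "\<dots> = ennreal (1 / c) * ennreal (enn2real I)"
    using fin by (simp add: I_def)
  also have "\<dots> = ennreal (enn2real I / c)"
    using c by (simp add: ennreal_mult[symmetric])
  also have "\<dots> \<le> 1" using c by (simp add: c_def divide_le_eq)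
  finally have "luxemburg_admissible \<Phi> u (d * \<tau>)"
    using d \<tau> by (simp add: luxemburg_admissible_def)
  then show ?thesis by (rule that)
qed

lemma luxemburg_admissible_power_iff:
  assumes "v \<in> lp_space n"
  shows "luxemburg_admissible (\<lambda>t. t ^ n) v \<beta> \<longleftrightarrow>
           0 < \<beta> \<and> integral\<^sup>L lebesgue (\<lambda>x. \<bar>v x\<bar> ^ n) \<le> \<beta> ^ n"
proof (cases "0 < \<beta>")
  case True
  have "integrable lebesgue (\<lambda>x. \<bar>v x\<bar> ^ n / \<beta> ^ n)"
    using assms by (simp add: lp_space_def)
  then have "(\<integral>\<^sup>+ x. ennreal ((\<bar>v x\<bar> / \<beta>) ^ n) \<partial>lebesgue)
      = ennreal (integral\<^sup>L lebesgue (\<lambda>x. \<bar>v x\<bar> ^ n) / \<beta> ^ n)"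
    using True by (simp add: power_divide nn_integral_eq_integral)
  then show ?thesis
    using True by (simp add: luxemburg_admissible_def divide_le_eq)
qed (simp add: luxemburg_admissible_def)

lemma luxemburg_norm_power_eq_lp_norm:
  assumes "v \<in> lp_space n" "0 < n"
  shows "luxemburg_norm (\<lambda>t. t ^ n) v = lp_norm n v"
proof -
  define I where "I = integral\<^sup>L lebesgue (\<lambda>x. \<bar>v x\<bar> ^ n)"
  define r where "r = I powr (1 / real n)"
  have I: "0 \<le> I" by (simp add: I_def)
  have r: "0 \<le> r" "r ^ n = I"
  proof -
    show "0 \<le> r" by (simp add: r_def)
    then have "r ^ n = r powr real n" using assms(2) by (simp add: powr_realpow')
    also have "\<dots> = I" using I assms(2) by (simp add: r_def powr_powr)
    finally show "r ^ n = I" .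
  qed
  have "luxemburg_admissible (\<lambda>t. t ^ n) v \<beta> \<longleftrightarrow> 0 < \<beta> \<and> r \<le> \<beta>" for \<beta>
  proof -
    have "luxemburg_admissible (\<lambda>t. t ^ n) v \<beta> \<longleftrightarrow> 0 < \<beta> \<and> r ^ n \<le> \<beta> ^ n"
      using luxemburg_admissible_power_iff[OF assms(1)] r(2) by (simp add: I_def)
    also have "\<dots> \<longleftrightarrow> 0 < \<beta> \<and> r \<le> \<beta>"
      using power_mono_iff[OF r(1), of \<beta> n] assms(2) less_imp_le by blast
    finally show ?thesis .
  qed
  then have "luxemburg_norm (\<lambda>t. t ^ n) v = Inf {\<beta>. 0 < \<beta> \<and> r \<le> \<beta>}"
    unfolding luxemburg_norm_eq_Inf_admissible by (intro arg_cong[where f = Inf]) auto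
  also have "\<dots> = r"
  proof (cases "r = 0")
    case True
    then have "{\<beta>. 0 < \<beta> \<and> r \<le> \<beta>} = {0<..}" by auto
    then show ?thesis using True by simp
  next
    case False
    then have "{\<beta>. 0 < \<beta> \<and> r \<le> \<beta>} = {r..}" using r(1) by auto
    then show ?thesis by simp
  qed
  finally show ?thesis by (simp add: lp_norm_def r_def I_def)
qed

lemma lp_space_imp_luxemburg_admissible:
  assumes "v \<in> lp_space n" "0 < n"
  obtains \<beta> where "luxemburg_admissible (\<lambda>t. t ^ n) v \<beta>"
proof
  let ?I = "integral\<^sup>L lebesgue (\<lambda>x. \<bar>v x\<bar> ^ n)"
  have "?I \<le> max 1 ?I ^ n"
    using self_le_power[of "max 1 ?I" n] assms(2) by linarith
  then show "luxemburg_admissible (\<lambda>t. t ^ n) v (max 1 ?I)"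
    by (simp add: luxemburg_admissible_power_iff[OF assms(1)])
qed

locale young_product_inequality =
  fixes \<Phi> \<Psi> \<Theta> :: "real \<Rightarrow> real" and K :: real
  assumes \<Phi>_convex: "convex_on {0..} \<Phi>" and \<Phi>_zero: "\<Phi> 0 = 0"
    and \<Phi>_nonneg: "\<And>t. 0 \<le> t \<Longrightarrow> 0 \<le> \<Phi> t"
    and \<Psi>_mono: "mono_on {0..} \<Psi>" and \<Psi>_nonneg: "\<And>t. 0 \<le> t \<Longrightarrow> 0 \<le> \<Psi> t"
    and \<Theta>_mono: "mono_on {0..} \<Theta>" and \<Theta>_nonneg: "\<And>t. 0 \<le> t \<Longrightarrow> 0 \<le> \<Theta> t"
    and K_nonneg: "0 \<le> K"
    and young: "\<And>a b. 0 \<le> a \<Longrightarrow> 0 \<le> b \<Longrightarrow> \<Phi> (a * b) \<le> \<Psi> a + K * \<Theta> b"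
begin

lemma luxemburg_admissible_mult:
  assumes u: "u \<in> borel_measurable lebesgue" and v: "v \<in> borel_measurable lebesgue"
    and \<alpha>: "luxemburg_admissible \<Psi> u \<alpha>" and \<beta>: "luxemburg_admissible \<Theta> v \<beta>"
  shows "luxemburg_admissible \<Phi> (\<lambda>x. u x * v x) ((1 + K) * \<alpha> * \<beta>)"
proof -
  have \<alpha>_pos: "0 < \<alpha>" and \<beta>_pos: "0 < \<beta>"
    using \<alpha> \<beta> by (auto simp: luxemburg_admissible_def)
  have pointwise: "ennreal (\<Phi> (\<bar>u x * v x\<bar> / ((1 + K) * \<alpha> * \<beta>)))
      \<le> ennreal (1 / (1 + K)) * ennreal (\<Psi> (\<bar>u x\<bar> / \<alpha>))
        + ennreal (K / (1 + K)) * ennreal (\<Theta> (\<bar>v x\<bar> / \<beta>))" for x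
  proof -
    define a b where "a = \<bar>u x\<bar> / \<alpha>" and "b = \<bar>v x\<bar> / \<beta>"
    have ab: "0 \<le> a" "0 \<le> b" using \<alpha>_pos \<beta>_pos by (auto simp: a_def b_def)
    have "\<Phi> (\<bar>u x * v x\<bar> / ((1 + K) * \<alpha> * \<beta>)) = \<Phi> (a * b / (1 + K))"
      by (simp add: a_def b_def abs_mult mult_ac)
    also have "\<dots> \<le> \<Phi> (a * b) / (1 + K)"
      using ab K_nonneg by (intro convex_on_zero_divide_le[OF \<Phi>_convex \<Phi>_zero]) auto
    also have "\<dots> \<le> 1 / (1 + K) * \<Psi> a + K / (1 + K) * \<Theta> b"
      using divide_right_mono[OF young[OF ab], of "1 + K"] K_nonneg by (simp add: add_divide_distrib)
    finally show ?thesis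
      using ab K_nonneg \<Psi>_nonneg[OF ab(1)] \<Theta>_nonneg[OF ab(2)]
      by (simp add: a_def b_def ennreal_mult[symmetric] ennreal_plus[symmetric] ennreal_leI
          del: ennreal_plus)
  qed
  have "(\<integral>\<^sup>+ x. ennreal (\<Phi> (\<bar>u x * v x\<bar> / ((1 + K) * \<alpha> * \<beta>))) \<partial>lebesgue)
      \<le> (\<integral>\<^sup>+ x. ennreal (1 / (1 + K)) * ennreal (\<Psi> (\<bar>u x\<bar> / \<alpha>))
        + ennreal (K / (1 + K)) * ennreal (\<Theta> (\<bar>v x\<bar> / \<beta>)) \<partial>lebesgue)"
    by (intro nn_integral_mono pointwise)
  also have "\<dots> = ennreal (1 / (1 + K)) * (\<integral>\<^sup>+ x. ennreal (\<Psi> (\<bar>u x\<bar> / \<alpha>)) \<partial>lebesgue)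
        + ennreal (K / (1 + K)) * (\<integral>\<^sup>+ x. ennreal (\<Theta> (\<bar>v x\<bar> / \<beta>)) \<partial>lebesgue)"
    using borel_measurable_mono_on_abs_divide[OF \<Psi>_mono u, of \<alpha>]
      borel_measurable_mono_on_abs_divide[OF \<Theta>_mono v, of \<beta>] \<alpha>_pos \<beta>_pos
    by (simp add: nn_integral_add nn_integral_cmult)
  also have "\<dots> \<le> ennreal (1 / (1 + K)) * 1 + ennreal (K / (1 + K)) * 1"
    using \<alpha> \<beta> by (intro add_mono mult_left_mono) (auto simp: luxemburg_admissible_def)
  also have "\<dots> = 1"
    using K_nonneg by (simp add: ennreal_plus[symmetric] add_divide_distrib[symmetric] del: ennreal_plus)
  finally show ?thesis
    using \<alpha>_pos \<beta>_pos K_nonneg by (simp add: luxemburg_admissible_def)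
qed

theorem luxemburg_norm_mult_le:
  assumes u: "u \<in> borel_measurable lebesgue" and v: "v \<in> borel_measurable lebesgue"
    and \<alpha>: "luxemburg_admissible \<Psi> u \<alpha>" and \<beta>: "luxemburg_admissible \<Theta> v \<beta>"
  shows "(\<lambda>x. u x * v x) \<in> orlicz_space \<Phi>"
    and "luxemburg_norm \<Phi> (\<lambda>x. u x * v x) \<le> (1 + K) * luxemburg_norm \<Psi> u * luxemburg_norm \<Theta> v"
proof -
  show "(\<lambda>x. u x * v x) \<in> orlicz_space \<Phi>"
    using u v by (intro luxemburg_admissible_imp_orlicz_space[OF luxemburg_admissible_mult[OF u v \<alpha> \<beta>]])
      measurable
  have "luxemburg_norm \<Phi> (\<lambda>x. u x * v x) \<le> ((1 + K) * b) * luxemburg_norm \<Psi> u"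
    if "luxemburg_admissible \<Theta> v b" for b
    unfolding luxemburg_norm_eq_Inf_admissible[of \<Psi>]
    using \<alpha> that K_nonneg luxemburg_norm_le[OF luxemburg_admissible_mult[OF u v _ that]]
    by (intro le_mult_cInf) (auto simp: luxemburg_admissible_def mult_ac)
  then have "luxemburg_norm \<Phi> (\<lambda>x. u x * v x) \<le> ((1 + K) * luxemburg_norm \<Psi> u) * luxemburg_norm \<Theta> v"
    unfolding luxemburg_norm_eq_Inf_admissible[of \<Theta>]
    using \<beta> K_nonneg luxemburg_norm_nonneg[OF \<alpha>]
    by (intro le_mult_cInf) (auto simp: mult_ac)
  then show "luxemburg_norm \<Phi> (\<lambda>x. u x * v x) \<le> (1 + K) * luxemburg_norm \<Psi> u * luxemburg_norm \<Theta> v"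
    by simp
qed

end

locale bounded_index_young =
  fixes \<Lambda> :: "real \<Rightarrow> real" and N :: nat and s :: real
  assumes young: "young_function \<Lambda>"
    and differentiable: "\<And>t. 0 < t \<Longrightarrow> \<Lambda> differentiable (at t)"
    and N_ge_2: "2 \<le> N"
    and s_less_N: "s < real N"
    and index_le: "\<And>t. 0 < t \<Longrightarrow> t * deriv \<Lambda> t / \<Lambda> t \<le> s"
begin

lemma \<Lambda>_convex: "convex_on {0..} \<Lambda>"
  and \<Lambda>_zero: "\<Lambda> 0 = 0"
  and \<Lambda>_nonneg: "0 \<le> t \<Longrightarrow> 0 \<le> \<Lambda> t"
  using young by (auto simp: young_function_def)

lemma \<Lambda>_pos: "0 < t \<Longrightarrow> 0 < \<Lambda> t"
  using young unfolding young_function_def by (metis less_eq_real_def less_irrefl)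

lemma \<Lambda>_mono: "0 \<le> x \<Longrightarrow> x \<le> y \<Longrightarrow> \<Lambda> x \<le> \<Lambda> y"
  using convex_on_zero_mono_on[OF \<Lambda>_convex \<Lambda>_zero \<Lambda>_nonneg] by (auto simp: mono_on_def)

lemma \<Lambda>_has_derivative: "0 < t \<Longrightarrow> (\<Lambda> has_real_derivative deriv \<Lambda> t) (at t)"
  using differentiable DERIV_deriv_iff_real_differentiable by blast

lemma \<Lambda>_continuous_on: "continuous_on {0<..} \<Lambda>"
  by (meson DERIV_isCont \<Lambda>_has_derivative continuous_at_imp_continuous_on greaterThan_iff)

text \<open>The index bound says exactly that \<open>\<Lambda> t / t powr s\<close> is nonincreasing.\<close>
lemma \<Lambda>_powr_antimono:
  assumes "0 < t" "t \<le> r"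
  shows "\<Lambda> r * t powr s \<le> \<Lambda> t * r powr s"
proof -
  let ?f = "\<lambda>x. \<Lambda> x * x powr (-s)"
  have "?f r \<le> ?f t"
  proof (rule DERIV_nonpos_imp_nonincreasing[OF assms(2)])
    fix x assume "t \<le> x" "x \<le> r"
    then have x: "0 < x" using assms by simp
    have "(?f has_real_derivative deriv \<Lambda> x * x powr (-s) + \<Lambda> x * (-s * x powr (-s - 1))) (at x)"
      using DERIV_mult[OF \<Lambda>_has_derivative[OF x] has_real_derivative_powr[OF x, of "-s"]]
      by (simp add: algebra_simps)
    moreover have "x powr (-s) = x * x powr (-s - 1)"
      using x by (simp add: powr_diff powr_minus divide_simps)
    ultimately have "(?f has_real_derivative (x * deriv \<Lambda> x - s * \<Lambda> x) * x powr (-s - 1)) (at x)"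
      by (simp add: algebra_simps)
    moreover have "x * deriv \<Lambda> x \<le> s * \<Lambda> x"
      using index_le[OF x] \<Lambda>_pos[OF x] by (simp add: divide_le_eq)
    then have "(x * deriv \<Lambda> x - s * \<Lambda> x) * x powr (-s - 1) \<le> 0"
      by (intro mult_nonpos_nonneg) auto
    ultimately show "\<exists>y. (?f has_real_derivative y) (at x) \<and> y \<le> 0" by blast
  qed
  then have "\<Lambda> r * r powr (-s) * (t powr s * r powr s) \<le> \<Lambda> t * t powr (-s) * (t powr s * r powr s)"
    by (intro mult_right_mono) auto
  then show ?thesis using assms by (simp add: powr_minus field_simps)
qed

text \<open>\<open>h\<close> is the integrand of \<open>sob_H\<close>; it is dominated near 0 by a multiple of
  \<open>t powr \<gamma>\<close>, and \<open>\<gamma> > -1\<close> is where \<open>s < N\<close> enters.\<close>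
definition \<gamma> :: real where "\<gamma> = (1 - s) / (real N - 1)"
definition h :: "real \<Rightarrow> real" where "h t = (t / \<Lambda> t) powr (1 / (real N - 1))"
definition F :: "real \<Rightarrow> real" where "F r = (LBINT t=0..r. h t)"

lemma \<gamma>_gt_minus_one: "-1 < \<gamma>"
  using N_ge_2 s_less_N by (simp add: \<gamma>_def field_simps)

lemma h_nonneg: "0 \<le> h t"
  by (simp add: h_def)

lemma h_pos: "0 < t \<Longrightarrow> 0 < h t"
  using \<Lambda>_pos[of t] by (simp add: h_def)

lemma h_antimono:
  assumes "0 < t" "t \<le> r"
  shows "h r \<le> h t"
proof -
  have "\<Lambda> t \<le> t / r * \<Lambda> r"
    using assms by (intro convex_on_zero_chord[OF \<Lambda>_convex \<Lambda>_zero]) auto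
  then have "r / \<Lambda> r \<le> t / \<Lambda> t"
    using \<Lambda>_pos[of t] \<Lambda>_pos[of r] assms by (simp add: field_simps)
  then show ?thesis
    unfolding h_def using N_ge_2 \<Lambda>_pos[of r] assms by (intro powr_mono2) auto
qed

lemma h_le_powr:
  assumes "0 < t" "t \<le> r"
  shows "h t \<le> h r * r powr (-\<gamma>) * t powr \<gamma>"
proof -
  have r: "0 < r" using assms by simp
  have "\<Lambda> r * t powr s \<le> \<Lambda> t * r powr s" by (rule \<Lambda>_powr_antimono[OF assms])
  then have "t / \<Lambda> t \<le> (r / \<Lambda> r) * (t powr (1 - s) * r powr (s - 1))"
    using \<Lambda>_pos[of t] \<Lambda>_pos[of r] assms r by (simp add: powr_diff field_simps)
  then have "h t \<le> ((r / \<Lambda> r) * (t powr (1 - s) * r powr (s - 1))) powr (1 / (real N - 1))"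
    unfolding h_def using N_ge_2 \<Lambda>_pos[of t] assms by (intro powr_mono2) auto
  also have "\<dots> = h r * ((t powr (1 - s)) powr (1 / (real N - 1)) * (r powr (s - 1)) powr (1 / (real N - 1)))"
    unfolding h_def using \<Lambda>_pos[of r] r by (simp add: powr_mult del: times_divide_eq_left)
  also have "\<dots> = h r * r powr (-\<gamma>) * t powr \<gamma>"
    by (simp add: powr_powr \<gamma>_def minus_divide_left)
  finally show ?thesis .
qed

lemma h_continuous_on: "continuous_on {0<..} h"
  unfolding h_def using N_ge_2 \<Lambda>_pos
  by (intro continuous_on_powr' continuous_intros continuous_on_subset[OF \<Lambda>_continuous_on])
     (auto simp: less_imp_le dual_order.strict_implies_not_eq)

lemma h_majorant_has_integral:
  assumes "0 \<le> r"
  shows "((\<lambda>t. h r * r powr (-\<gamma>) * t powr \<gamma>) has_integral h r * r powr (-\<gamma>) * (r powr (\<gamma> + 1) / (\<gamma> + 1))) {0<..<r}"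
  using has_integral_mult_right[OF has_integral_powr_from_0[OF \<gamma>_gt_minus_one assms]]
  by (simp add: has_integral_Icc_iff_Ioo)

lemma h_absolutely_integrable_on: "h absolutely_integrable_on {0<..<r}"
proof (cases "0 < r")
  case True
  have "h integrable_on {0<..<r}"
  proof (rule measurable_bounded_by_integrable_imp_integrable)
    show "h \<in> borel_measurable (lebesgue_on {0<..<r})"
      by (rule continuous_imp_measurable_on_sets_lebesgue)
         (auto intro: continuous_on_subset[OF h_continuous_on])
    show "(\<lambda>t. h r * r powr (-\<gamma>) * t powr \<gamma>) integrable_on {0<..<r}"
      using h_majorant_has_integral True by (meson has_integral_integrable less_imp_le)
    show "norm (h t) \<le> h r * r powr (-\<gamma>) * t powr \<gamma>" if "t \<in> {0<..<r}" for t
      using h_le_powr[of t r] that h_nonneg[of t] by simp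
  qed auto
  then show ?thesis by (rule nonnegative_absolutely_integrable_1) (rule h_nonneg)
qed simp

lemma h_has_integral_F:
  assumes "0 \<le> r"
  shows "(h has_integral F r) {0<..<r}"
proof -
  have "(\<lambda>x. indicator {0<..<r} x *\<^sub>R h x) \<in> borel_measurable borel"
    by (rule borel_measurable_continuous_on_indicator)
       (auto intro: continuous_on_subset[OF h_continuous_on])
  then have "(\<lambda>x. indicator {0<..<r} x *\<^sub>R h x) \<in> borel_measurable lborel"
    by simp
  then have "set_integrable lborel {0<..<r} h"
    using h_absolutely_integrable_on[of r] integrable_completion
    unfolding set_integrable_def by metis
  moreover have "einterval 0 (ereal r) = {0<..<r}"
    using einterval_eq_Icc[of 0 r] by (simp add: zero_ereal_def)
  ultimately have "F r = integral {0<..<r} h"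
    unfolding F_def using assms interval_integral_eq_integral'[where a = 0 and b = "ereal r" and f = h]
    by simp
  moreover have "h integrable_on {0<..<r}"
    using h_absolutely_integrable_on[of r] by (rule set_lebesgue_integral_eq_integral)
  ultimately show ?thesis by (simp add: integrable_integral)
qed

lemma F_zero: "F 0 = 0"
  by (simp add: F_def flip: zero_ereal_def)

lemma h_has_integral_F_Icc: "0 \<le> r \<Longrightarrow> (h has_integral F r) {0..r}"
  using h_has_integral_F by (simp add: has_integral_Icc_iff_Ioo)

lemma F_continuous_on: "continuous_on {0..R} F"
proof (cases "0 \<le> R")
  case True
  have "continuous_on {0..R} (\<lambda>r. integral {0..r} h)"
    using h_has_integral_F_Icc[OF True] by (intro indefinite_integral_continuous_1) blast
  then show ?thesis
    by (rule continuous_on_cong[THEN iffD1, rotated 2])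
       (auto intro!: integral_unique h_has_integral_F_Icc)
qed simp

lemma F_mono: "0 \<le> x \<Longrightarrow> x \<le> y \<Longrightarrow> F x \<le> F y"
  using h_has_integral_F_Icc[of x] h_has_integral_F_Icc[of y]
  by (intro has_integral_subset_le[of "{0..x}" "{0..y}" h]) (auto simp: h_nonneg)

lemma F_nonneg: "0 \<le> r \<Longrightarrow> 0 \<le> F r"
  using F_mono[of 0 r] F_zero by simp

lemma F_lower:
  assumes "0 < r"
  shows "r * h r \<le> F r"
proof -
  have "((\<lambda>_. h r) has_integral r * h r) {0<..<r}"
    using has_integral_const_real[of "h r" 0 r] assms by (simp add: has_integral_Icc_iff_Ioo)
  then show ?thesis
    by (rule has_integral_le[OF _ h_has_integral_F]) (use assms h_antimono in auto)
qed

lemma F_upper: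
  assumes "0 < r"
  shows "F r \<le> r * h r / (\<gamma> + 1)"
proof -
  have "F r \<le> h r * r powr (-\<gamma>) * (r powr (\<gamma> + 1) / (\<gamma> + 1))"
    by (rule has_integral_le[OF h_has_integral_F h_majorant_has_integral])
       (use assms h_le_powr in auto)
  also have "\<dots> = r * h r / (\<gamma> + 1)"
    using assms by (simp add: powr_add powr_minus field_simps)
  finally show ?thesis .
qed

lemma F_pos: "0 < r \<Longrightarrow> 0 < F r"
  using F_lower[of r] h_pos[of r] by (meson mult_pos_pos order_less_le_trans)

lemma F_dilation_lower:
  assumes "0 < y" "y \<le> r"
  shows "(\<gamma> + 1) * (y / r) * F r \<le> F y"
proof -
  have "(\<gamma> + 1) * F r \<le> r * h r"
    using F_upper[of r] assms \<gamma>_gt_minus_one by (simp add: field_simps)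
  then have "(\<gamma> + 1) * (y / r) * F r \<le> (y / r) * (r * h r)"
    using mult_left_mono[of "(\<gamma> + 1) * F r" "r * h r" "y / r"] assms by (simp add: mult_ac)
  also have "\<dots> = y * h r" using assms by simp
  also have "\<dots> \<le> y * h y" using h_antimono[OF assms] assms by simp
  also have "\<dots> \<le> F y" by (rule F_lower[OF assms(1)])
  finally show ?thesis .
qed

lemma F_at_top: "filterlim F at_top at_top"
proof (rule filterlim_at_top_mono)
  show "filterlim (\<lambda>R. h 1 * R powr (\<gamma> + 1)) at_top at_top"
    using h_pos[of 1] \<gamma>_gt_minus_one
    by (intro filterlim_tendsto_pos_mult_at_top[OF tendsto_const] real_powr_at_top) auto
  show "\<forall>\<^sub>F R in at_top. h 1 * R powr (\<gamma> + 1) \<le> F R"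
    using eventually_ge_at_top[of 1]
  proof eventually_elim
    case (elim R)
    have "h 1 * R powr \<gamma> \<le> h R"
      using h_le_powr[of 1 R] elim by (simp add: powr_minus field_simps)
    then have "R * (h 1 * R powr \<gamma>) \<le> R * h R" using elim by simp
    also have "\<dots> \<le> F R" using F_lower elim by simp
    finally show ?case using elim by (simp add: powr_add mult_ac)
  qed
qed

abbreviation H :: "real \<Rightarrow> real" where "H \<equiv> sob_H \<Lambda> N"
abbreviation G :: "real \<Rightarrow> real" where "G \<equiv> inv_into {0..} H"

lemma H_eq_F_powr: "H r = F r powr ((real N - 1) / real N)"
  by (simp add: sob_H_def F_def h_def)

lemma H_zero: "H 0 = 0"
  by (simp add: H_eq_F_powr F_zero)

lemma H_pos: "0 < r \<Longrightarrow> 0 < H r"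
  using F_pos[of r] by (simp add: H_eq_F_powr)

lemma H_mono: "0 \<le> x \<Longrightarrow> x \<le> y \<Longrightarrow> H x \<le> H y"
  unfolding H_eq_F_powr using N_ge_2 by (intro powr_mono2 F_mono F_nonneg) auto

lemma H_continuous_on: "continuous_on {0..R} H"
  unfolding H_eq_F_powr using N_ge_2 F_nonneg
  by (intro continuous_on_powr' F_continuous_on continuous_intros) auto

lemma H_at_top: "filterlim H at_top at_top"
  unfolding H_eq_F_powr using N_ge_2
  by (intro filterlim_compose[OF real_powr_at_top F_at_top]) auto

lemma H_surj:
  assumes "0 \<le> a"
  obtains r where "0 \<le> r" "H r = a"
proof -
  have "\<forall>\<^sub>F R in at_top. 0 \<le> R \<and> a \<le> H R"
    using H_at_top eventually_ge_at_top[of 0] by (simp add: filterlim_at_top eventually_conj)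
  then obtain R where R: "0 \<le> R" "a \<le> H R"
    using eventually_happens'[OF trivial_limit_at_top_linorder] by blast
  then have "\<exists>r. 0 \<le> r \<and> r \<le> R \<and> H r = a"
    using assms by (intro IVT' H_continuous_on) (auto simp: H_zero)
  then show ?thesis using that by blast
qed

lemma G_nonneg: "0 \<le> a \<Longrightarrow> 0 \<le> G a"
  and H_G: "0 \<le> a \<Longrightarrow> H (G a) = a"
proof -
  assume "0 \<le> a"
  then have "a \<in> H ` {0..}" by (metis H_surj atLeast_iff image_eqI)
  then show "0 \<le> G a" "H (G a) = a"
    using inv_into_into[of a H "{0..}"] f_inv_into_f[of a H "{0..}"] by auto
qed

lemma G_le:
  assumes "0 \<le> b" "0 \<le> y" "b < H y"
  shows "G b \<le> y"
proof (rule ccontr)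
  assume "\<not> G b \<le> y"
  then have "H y \<le> H (G b)" using assms by (intro H_mono) auto
  then show False using assms H_G[of b] by simp
qed

lemma G_mono:
  assumes "0 \<le> a" "a \<le> b"
  shows "G a \<le> G b"
proof (rule ccontr)
  assume "\<not> G a \<le> G b"
  then have "H (G b) \<le> H (G a)" using G_nonneg[of b] assms by (intro H_mono) auto
  then show False
    using \<open>\<not> G a \<le> G b\<close> assms H_G[of a] H_G[of b] by simp
qed

lemma sobolev_conjugate_eq: "sobolev_conjugate \<Lambda> N a = \<Lambda> (G a)"
  by (simp add: sobolev_conjugate_def)

lemma sobolev_conjugate_mono_on: "mono_on {0..} (sobolev_conjugate \<Lambda> N)"
proof (rule mono_onI)
  fix a b :: real assume "a \<in> {0..}" "b \<in> {0..}" "a \<le> b"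
  then show "sobolev_conjugate \<Lambda> N a \<le> sobolev_conjugate \<Lambda> N b"
    unfolding sobolev_conjugate_eq by (intro \<Lambda>_mono G_mono G_nonneg) auto
qed

lemma sobolev_conjugate_nonneg: "0 \<le> a \<Longrightarrow> 0 \<le> sobolev_conjugate \<Lambda> N a"
  by (simp add: sobolev_conjugate_eq \<Lambda>_nonneg G_nonneg)

definition K :: real where "K = 1 / (\<gamma> + 1) ^ (N - 1)"

lemma K_pos: "0 < K"
  using \<gamma>_gt_minus_one by (simp add: K_def)

lemma \<Lambda>_mult_H_power_le:
  assumes "0 < r"
  shows "\<Lambda> r * H r ^ N \<le> K * r ^ N"
proof -
  have F: "0 < F r" using F_pos[OF assms] .
  have "H r ^ N = F r ^ (N - 1)"
  proof -
    have "H r ^ N = F r powr ((real N - 1) / real N * real N)"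
      using F by (simp add: H_eq_F_powr powr_powr flip: powr_realpow)
    also have "(real N - 1) / real N * real N = real (N - 1)"
      using N_ge_2 by (simp add: of_nat_diff)
    finally show ?thesis using F by (simp add: powr_realpow)
  qed
  also have "\<dots> \<le> (r * h r / (\<gamma> + 1)) ^ (N - 1)"
    using F by (intro power_mono F_upper assms) simp
  also have "\<dots> = K * r ^ (N - 1) * h r ^ (N - 1)"
    by (simp add: K_def power_mult_distrib power_divide)
  also have "h r ^ (N - 1) = r / \<Lambda> r"
  proof -
    have "h r ^ (N - 1) = (r / \<Lambda> r) powr (1 / (real N - 1) * real (N - 1))"
      using \<Lambda>_pos[OF assms] assms by (simp add: h_def powr_powr flip: powr_realpow)
    also have "1 / (real N - 1) * real (N - 1) = 1"
      using N_ge_2 by (simp add: of_nat_diff)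
    finally show ?thesis using \<Lambda>_pos[OF assms] assms by simp
  qed
  finally have "\<Lambda> r * H r ^ N \<le> K * r ^ (N - 1) * r"
    using \<Lambda>_pos[OF assms] by (simp add: field_simps)
  also have "\<dots> = K * r ^ N"
    using N_ge_2 by (simp add: power_eq_if[of r N])
  finally show ?thesis .
qed

text \<open>If \<open>a b\<close> lies beyond \<open>G a\<close>, then \<open>a \<le> H (a b)\<close>, and the previous lemma bounds
  \<open>\<Lambda> (a b)\<close> by \<open>K b ^ N\<close>; otherwise \<open>\<Lambda> (a b) \<le> \<Lambda> (G a)\<close> by monotonicity.\<close>
lemma young_sobolev_conjugate:
  assumes "0 \<le> a" "0 \<le> b"
  shows "\<Lambda> (a * b) \<le> sobolev_conjugate \<Lambda> N a + K * b ^ N"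
proof (cases "a * b \<le> G a")
  case True
  then have "\<Lambda> (a * b) \<le> sobolev_conjugate \<Lambda> N a"
    using assms by (simp add: sobolev_conjugate_eq \<Lambda>_mono)
  then show ?thesis using K_pos assms by (simp add: add_increasing2)
next
  case False
  let ?r = "a * b"
  have r: "0 < ?r" using False G_nonneg[OF assms(1)] by simp
  then have a: "0 < a" using assms by (simp add: zero_less_mult_iff)
  have "a \<le> H ?r"
    using H_mono[of "G a" ?r] False G_nonneg[OF assms(1)] H_G[OF assms(1)] by simp
  then have "\<Lambda> ?r * a ^ N \<le> \<Lambda> ?r * H ?r ^ N"
    using \<Lambda>_pos[OF r] assms by (intro mult_left_mono power_mono) auto
  also have "\<dots> \<le> K * ?r ^ N" by (rule \<Lambda>_mult_H_power_le[OF r])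
  also have "\<dots> = (K * b ^ N) * a ^ N" by (simp add: power_mult_distrib)
  finally have "\<Lambda> ?r \<le> K * b ^ N" using a by simp
  then show ?thesis using sobolev_conjugate_nonneg[OF assms(1)] by simp
qed

lemma sobolev_conjugate_dilation:
  assumes c: "1 \<le> c"
  shows "\<exists>d>0. \<forall>a\<ge>0. sobolev_conjugate \<Lambda> N (a / d) \<le> sobolev_conjugate \<Lambda> N a / c"
proof (intro exI conjI allI impI)
  let ?p = "(real N - 1) / real N"
  let ?\<kappa> = "((\<gamma> + 1) / c) powr ?p"
  have \<kappa>: "0 < ?\<kappa>" using \<gamma>_gt_minus_one c by simp
  show "0 < 2 / ?\<kappa>" using \<kappa> by simp
  fix a :: real assume "0 \<le> a"
  show "sobolev_conjugate \<Lambda> N (a / (2 / ?\<kappa>)) \<le> sobolev_conjugate \<Lambda> N a / c"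
  proof (cases "a = 0")
    case True
    have "G a = 0"
    proof (rule ccontr)
      assume "G a \<noteq> 0"
      then have "0 < H (G a)" using G_nonneg[of a] True by (intro H_pos) auto
      then show False using H_G[of a] True by simp
    qed
    then show ?thesis using True by (simp add: sobolev_conjugate_eq \<Lambda>_zero)
  next
    case False
    let ?r = "G a"
    have "?r \<noteq> 0" using H_G[OF \<open>0 \<le> a\<close>] H_zero False by auto
    then have r: "0 < ?r" using G_nonneg[OF \<open>0 \<le> a\<close>] by simp
    have y: "0 < ?r / c" "?r / c \<le> ?r" using r c by (auto simp: divide_le_eq)
    have "?\<kappa> * a = ((\<gamma> + 1) / c) powr ?p * F ?r powr ?p"
      using H_G[OF \<open>0 \<le> a\<close>] by (simp add: H_eq_F_powr)
    also have "\<dots> = ((\<gamma> + 1) / c * F ?r) powr ?p"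
      by (rule powr_mult[symmetric])
    also have "\<dots> \<le> F (?r / c) powr ?p"
      using F_dilation_lower[OF y] r c \<gamma>_gt_minus_one N_ge_2 F_nonneg[of ?r]
      by (intro powr_mono2) (auto simp: mult_ac)
    also have "\<dots> = H (?r / c)"
      by (rule H_eq_F_powr[symmetric])
    finally have "?\<kappa> * a \<le> H (?r / c)" .
    moreover have "a / (2 / ?\<kappa>) = ?\<kappa> * a / 2" by simp
    moreover have "0 < ?\<kappa> * a" using \<kappa> False \<open>0 \<le> a\<close> by simp
    ultimately have "a / (2 / ?\<kappa>) < H (?r / c)" by linarith
    then have "G (a / (2 / ?\<kappa>)) \<le> ?r / c"
      using \<kappa> \<open>0 \<le> a\<close> y by (intro G_le) auto
    then have "sobolev_conjugate \<Lambda> N (a / (2 / ?\<kappa>)) \<le> \<Lambda> (?r / c)"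
      using \<kappa> \<open>0 \<le> a\<close> by (simp add: sobolev_conjugate_eq \<Lambda>_mono G_nonneg)
    also have "\<dots> \<le> \<Lambda> ?r / c"
      using r c by (intro convex_on_zero_divide_le[OF \<Lambda>_convex \<Lambda>_zero]) auto
    finally show ?thesis by (simp add: sobolev_conjugate_eq)
  qed
qed

sublocale young_product_inequality \<Lambda> "sobolev_conjugate \<Lambda> N" "\<lambda>t. t ^ N" K
  using \<Lambda>_convex \<Lambda>_zero \<Lambda>_nonneg sobolev_conjugate_mono_on sobolev_conjugate_nonneg K_pos
    young_sobolev_conjugate
  by unfold_locales (auto intro: mono_onI power_mono)

theorem orlicz_hoelder_sobolev_conjugate:
  fixes u v :: "'a::euclidean_space \<Rightarrow> real"
  assumes u: "u \<in> orlicz_space (sobolev_conjugate \<Lambda> N)" and v: "v \<in> lp_space N"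
  shows "(\<lambda>x. u x * v x) \<in> orlicz_space \<Lambda>"
    and "luxemburg_norm \<Lambda> (\<lambda>x. u x * v x)
           \<le> (1 + K) * luxemburg_norm (sobolev_conjugate \<Lambda> N) u * lp_norm N v"
proof -
  obtain \<alpha> where \<alpha>: "luxemburg_admissible (sobolev_conjugate \<Lambda> N) u \<alpha>"
    using orlicz_space_imp_luxemburg_admissible[OF u sobolev_conjugate_mono_on
        sobolev_conjugate_nonneg sobolev_conjugate_dilation] .
  obtain \<beta> where \<beta>: "luxemburg_admissible (\<lambda>t. t ^ N) v \<beta>"
    using lp_space_imp_luxemburg_admissible[OF v] N_ge_2 by auto
  have "u \<in> borel_measurable lebesgue" "v \<in> borel_measurable lebesgue"
    using u v by (simp_all add: orlicz_space_def lp_space_def)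
  from luxemburg_norm_mult_le[OF this \<alpha> \<beta>]
  show "(\<lambda>x. u x * v x) \<in> orlicz_space \<Lambda>"
    and "luxemburg_norm \<Lambda> (\<lambda>x. u x * v x)
           \<le> (1 + K) * luxemburg_norm (sobolev_conjugate \<Lambda> N) u * lp_norm N v"
    using luxemburg_norm_power_eq_lp_norm[OF v] N_ge_2 by simp_all
qed

end

theorem proposition2p17:
  fixes \<Lambda> :: "real \<Rightarrow> real"
  assumes N2: "CARD('n::finite) \<ge> 2"
    and young: "young_function \<Lambda>"
    and diff: "\<forall>t>0. \<Lambda> differentiable (at t)"
    and s_lt: "s_index \<Lambda> < ereal (real CARD('n))"
  shows "\<exists>C>0. \<forall>(u :: real^'n \<Rightarrow> real) v.
           u \<in> orlicz_space (sobolev_conjugate \<Lambda> CARD('n)) \<longrightarrow>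
           v \<in> lp_space CARD('n) \<longrightarrow>
           (\<lambda>x. u x * v x) \<in> orlicz_space \<Lambda> \<and>
           luxemburg_norm \<Lambda> (\<lambda>x. u x * v x)
             \<le> C * luxemburg_norm (sobolev_conjugate \<Lambda> CARD('n)) u * lp_norm CARD('n) v"
proof -
  obtain s where s: "s_index \<Lambda> < ereal s" "s < real CARD('n)"
    using ereal_dense2[OF s_lt] by auto
  have "t * deriv \<Lambda> t / \<Lambda> t \<le> s" if "0 < t" for t
  proof -
    have "ereal (t * deriv \<Lambda> t / \<Lambda> t) \<le> s_index \<Lambda>"
      unfolding s_index_def using that by (intro SUP_upper) simp
    then show ?thesis using s(1) by (metis ereal_less_eq(3) order_le_less_trans order_less_imp_le)
  qed
  then interpret bounded_index_young \<Lambda> "CARD('n)" s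
    using young diff N2 s(2) by unfold_locales auto
  show ?thesis
    using K_pos orlicz_hoelder_sobolev_conjugate by (intro exI[of _ "1 + K"]) auto
qed

end
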